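(* Assume $\mu<0$ and conditions (C1) and (C2). For $T\ge1$ let $\mu^*_T=\mathbb E^*_{\pi^*}(f(X_1,Y_{1+T}))$. Then the limit $\mu^*_\infty=\lim_{T\to\infty}\mu^*_T$ exists (and equals $\pi^*_1\otimes\pi^*_2(f)$, $\pi^*_1,\pi^*_2$ the marginals of $\pi^*$), and $\mu^*_\infty<\mu^*:=\pi^*(f)$.
   Context: Let $E$ be a finite set and $P,Q$ irreducible aperiodic stochastic $E\times E$ matrices with invariant probability vectors $\pi_P,\pi_Q$; $\pi=\pi_P\otimes\pi_Q$. Let $f:E\times E\to\mathbb Z$ with gcd of its values equal to $1$; $\nu(f)=\sum f\,d\nu$; $\mu=\pi(f)$. A cycle w.r.t. $P$ is a sequence $x_1,\dots,x_n$ with $P(x_k,x_{k+1})>0$ for all $k$, indices mod $n$. (C1): for some $n\ge1$ there are cycles $x_1,\dots,x_n$ w.r.t. $P$ and $y_1,\dots,y_n$ w.r.t. $Q$ with $\sum_kf(x_k,y_k)>0$. (C2): for every $T\ge1$ there are $n\ge1$ and cycles $x_1,\dots,x_n$ w.r.t. $P$ and $y_1,\dots,y_n$ w.r.t. $Q$ with $\sum_kf(x_k,y_k)\ne\sum_kf(x_k,y_{k+T\bmod n})$. Let $\Phi(\theta)_{(x,y),(x',y')}=e^{\theta f(x',y')}P_{x,x'}Q_{y,y'}$, $\varphi(\theta)$ its spectral radius, $\theta^*>0$ the unique positive solution of $\varphi(\theta)=1$, $r^*$ a positive right eigenvector of $\Phi(\theta^* )$ for eigenvalue 1, $R^*_{(x,y),(x',y')}=\frac{r^*(x',y')}{r^*(x,y)}\Phi(\theta^*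 )_{(x,y),(x',y')}$, and $\pi^*$ the invariant probability vector of $R^*$. $\mathbb P^*_{\pi^*}$ (expectation $\mathbb E^*_{\pi^*}$) is the law under which $(X_n,Y_n)_{n\ge0}$ is a stationary Markov chain on $E^2$ with transition matrix $R^*$. *)

theory Defs
  imports "HOL-Analysis.Analysis"
begin

primrec mpow :: "('a::finite \<Rightarrow> 'a \<Rightarrow> real) \<Rightarrow> nat \<Rightarrow> 'a \<Rightarrow> 'a \<Rightarrow> real" where
  "mpow A 0 = (\<lambda>i j. if i = j then 1 else 0)"
| "mpow A (Suc n) = (\<lambda>i j. \<Sum>k\<in>UNIV. mpow A n i k * A k j)"

definition stochastic :: "('a::finite \<Rightarrow> 'a \<Rightarrow> real) \<Rightarrow> bool" where
  "stochastic A \<longleftrightarrow> (\<forall>i j. A i j \<ge> 0) \<and> (\<forall>i. (\<Sum>j\<in>UNIV. A i j) = 1)"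

definition irreducible_mat :: "('a::finite \<Rightarrow> 'a \<Rightarrow> real) \<Rightarrow> bool" where
  "irreducible_mat A \<longleftrightarrow> (\<forall>i j. \<exists>n. mpow A n i j > 0)"

definition aperiodic_mat :: "('a::finite \<Rightarrow> 'a \<Rightarrow> real) \<Rightarrow> bool" where
  "aperiodic_mat A \<longleftrightarrow> (\<forall>i. Gcd {n. n > 0 \<and> mpow A n i i > 0} = (1::nat))"

definition invariant_prob :: "('a::finite \<Rightarrow> 'a \<Rightarrow> real) \<Rightarrow> ('a \<Rightarrow> real) \<Rightarrow> bool" where
  "invariant_prob A p \<longleftrightarrow> (\<forall>i. p i \<ge> 0) \<and> (\<Sum>i\<in>UNIV. p i) = 1 \<and>
     (\<forall>j. (\<Sum>i\<in>UNIV. p i * A i j) = p j)"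

definition spec_rad :: "('a::finite \<Rightarrow> 'a \<Rightarrow> real) \<Rightarrow> real" where
  "spec_rad A = Sup {cmod l | l. \<exists>v::'a \<Rightarrow> complex. v \<noteq> (\<lambda>_. 0) \<and>
      (\<forall>i. (\<Sum>j\<in>UNIV. complex_of_real (A i j) * v j) = l * v i)}"

definition is_cycle :: "('a \<Rightarrow> 'a \<Rightarrow> real) \<Rightarrow> nat \<Rightarrow> (nat \<Rightarrow> 'a) \<Rightarrow> bool" where
  "is_cycle P n x \<longleftrightarrow> n \<ge> 1 \<and> (\<forall>k<n. P (x k) (x ((k + 1) mod n)) > 0)"

definition cond_C1 :: "('a \<Rightarrow> 'a \<Rightarrow> real) \<Rightarrow> ('a \<Rightarrow> 'a \<Rightarrow> real) \<Rightarrow> ('a \<Rightarrow> 'a \<Rightarrow> int) \<Rightarrow> bool" where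
  "cond_C1 P Q f \<longleftrightarrow> (\<exists>n\<ge>1. \<exists>x y. is_cycle P n x \<and> is_cycle Q n y \<and>
      (\<Sum>k<n. f (x k) (y k)) > 0)"

definition cond_C2 :: "('a \<Rightarrow> 'a \<Rightarrow> real) \<Rightarrow> ('a \<Rightarrow> 'a \<Rightarrow> real) \<Rightarrow> ('a \<Rightarrow> 'a \<Rightarrow> int) \<Rightarrow> bool" where
  "cond_C2 P Q f \<longleftrightarrow> (\<forall>T::nat. T \<ge> 1 \<longrightarrow> (\<exists>n\<ge>1. \<exists>x y. is_cycle P n x \<and> is_cycle Q n y \<and>
      (\<Sum>k<n. f (x k) (y k)) \<noteq> (\<Sum>k<n. f (x k) (y ((k + T) mod n)))))"

definition Phi :: "('a \<Rightarrow> 'a \<Rightarrow> real) \<Rightarrow> ('a \<Rightarrow> 'a \<Rightarrow> real) \<Rightarrow> ('a \<Rightarrow> 'a \<Rightarrow> int) \<Rightarrow> real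
    \<Rightarrow> ('a \<times> 'a) \<Rightarrow> ('a \<times> 'a) \<Rightarrow> real" where
  "Phi P Q f \<theta> = (\<lambda>(x, y) (x', y'). exp (\<theta> * of_int (f x' y')) * P x x' * Q y y')"

text \<open>Doob transform R* of Phi(theta) by the positive right eigenvector r.\<close>
definition Rstar :: "('a \<Rightarrow> 'a \<Rightarrow> real) \<Rightarrow> ('a \<Rightarrow> 'a \<Rightarrow> real) \<Rightarrow> ('a \<Rightarrow> 'a \<Rightarrow> int) \<Rightarrow> real
    \<Rightarrow> ('a \<times> 'a \<Rightarrow> real) \<Rightarrow> ('a \<times> 'a) \<Rightarrow> ('a \<times> 'a) \<Rightarrow> real" where
  "Rstar P Q f \<theta> r = (\<lambda>u v. r v / r u * Phi P Q f \<theta> u v)"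

text \<open>E*_{pi*}(f(X_1, Y_{1+T})) for the stationary chain with transition matrix R
  and initial law p: the time-1 law is p, and (X_{1+T},Y_{1+T}) given (X_1,Y_1)
  has law R^T.\<close>
definition mu_star_T :: "(('a::finite \<times> 'a) \<Rightarrow> ('a \<times> 'a) \<Rightarrow> real) \<Rightarrow> ('a \<times> 'a \<Rightarrow> real)
    \<Rightarrow> ('a \<Rightarrow> 'a \<Rightarrow> int) \<Rightarrow> nat \<Rightarrow> real" where
  "mu_star_T R p f T = (\<Sum>u\<in>UNIV. \<Sum>v\<in>UNIV. p u * mpow R T u v * of_int (f (fst u) (snd v)))"

end

theory Submission
  imports Defs
begin

text \<open>
  Write \<open>R = R*\<close> and \<open>F(x, y) = f x y\<close>. Since \<open>P\<close> and \<open>Q\<close> are primitive and \<open>R\<close> dominates a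
  positive multiple of \<open>P \<otimes> Q\<close>, \<open>R\<close> is primitive, so \<open>R^T\<close> converges to the matrix with
  rows \<open>\<pi>*\<close> (Doeblin's contraction argument) and \<open>\<mu>*_T\<close> tends to the expectation of \<open>F\<close> under
  \<open>\<pi>*_1 \<otimes> \<pi>*_2\<close>.

  For the strict inequality compare two measures on pairs of states: the stationary edge measure
  \<open>\<nu>(u, v) = \<pi>*(u) R(u, v)\<close>, and the product \<open>e\<close> of its two coordinate edge measures. Each has
  equal row and column sums, and they share their coordinate edge marginals, so integrating
  \<open>ln R(u, v) = \<theta>* F(v) + ln P + ln Q + ln r*(v) - ln r*(u)\<close> against them gives
  \<open>\<theta>* (\<mu>* - \<mu>*_\<infinity>) = \<Sum> \<nu> ln R - \<Sum> e ln R\<close>. If \<open>K\<close> is the product of the transition matrices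
  of the two coordinates, then \<open>e\<close> is the edge measure of \<open>K\<close>, and Gibbs' inequality gives
  \<open>\<Sum> \<nu> ln R \<ge> \<Sum> \<nu> ln K = \<Sum> e ln K > \<Sum> e ln R\<close>. The last inequality is strict because \<open>R\<close>
  is not a product kernel: the weight of a product kernel along a pair of cycles does not change
  when the second cycle is rotated, which (C2) for \<open>T = 1\<close> rules out.
\<close>

section \<open>Powers of nonnegative matrices\<close>

lemma sum_UNIV_pair: "(\<Sum>u\<in>UNIV. g u) = (\<Sum>x\<in>UNIV. \<Sum>y\<in>UNIV. g (x, y))"
  by (simp add: sum.cartesian_product)

lemma mpow_add: "mpow A (a + b) i j = (\<Sum>k\<in>UNIV. mpow A a i k * mpow A b k j)"
proof (induction b arbitrary: j)
  case 0
  have "(\<Sum>k\<in>UNIV. mpow A a i k * mpow A 0 k j) = mpow A a i j"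
    by (simp add: if_distrib cong: if_cong)
  then show ?case by simp
next
  case (Suc b)
  have "mpow A (a + Suc b) i j = (\<Sum>k\<in>UNIV. (\<Sum>l\<in>UNIV. mpow A a i l * mpow A b l k) * A k j)"
    using Suc by simp
  also have "\<dots> = (\<Sum>l\<in>UNIV. mpow A a i l * (\<Sum>k\<in>UNIV. mpow A b l k * A k j))"
    by (simp add: sum_distrib_left sum_distrib_right mult.assoc) (rule sum.swap)
  finally show ?case by simp
qed

lemma mpow_nonneg: "(\<And>i j. 0 \<le> A i j) \<Longrightarrow> 0 \<le> mpow A n i j"
  by (induction n arbitrary: j) (auto intro!: sum_nonneg)

lemma stochastic_nonneg: "stochastic A \<Longrightarrow> 0 \<le> A i j"
  by (simp add: stochastic_def)

lemma invariant_prob_nonneg: "invariant_prob A p \<Longrightarrow> 0 \<le> p i"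
  by (simp add: invariant_prob_def)

lemma invariant_prob_sum: "invariant_prob A p \<Longrightarrow> (\<Sum>i\<in>UNIV. p i) = 1"
  by (simp add: invariant_prob_def)

lemma stochastic_row_sum: "stochastic A \<Longrightarrow> (\<Sum>j\<in>UNIV. A i j) = 1"
  unfolding stochastic_def by blast

lemma sum_mpow_row: assumes "stochastic A" shows "(\<Sum>j\<in>UNIV. mpow A n i j) = 1"
proof (induction n)
  case (Suc n)
  have "(\<Sum>j\<in>UNIV. mpow A (Suc n) i j) = (\<Sum>k\<in>UNIV. mpow A n i k * (\<Sum>j\<in>UNIV. A k j))"
    by (simp add: sum_distrib_left) (rule sum.swap)
  with assms Suc show ?case by (simp add: stochastic_def)
qed simp

lemma mpow_le_1: assumes "stochastic A" shows "mpow A n i j \<le> 1"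
proof -
  have "mpow A n i j \<le> (\<Sum>j\<in>UNIV. mpow A n i j)"
    by (rule member_le_sum) (simp_all add: mpow_nonneg stochastic_nonneg[OF assms])
  with sum_mpow_row[OF assms] show ?thesis by simp
qed

lemma invariant_prob_mpow:
  assumes "invariant_prob A p" shows "(\<Sum>i\<in>UNIV. p i * mpow A n i j) = p j"
proof (induction n arbitrary: j)
  case 0
  show ?case by (simp add: if_distrib cong: if_cong)
next
  case (Suc n)
  have "(\<Sum>i\<in>UNIV. p i * mpow A (Suc n) i j) = (\<Sum>k\<in>UNIV. (\<Sum>i\<in>UNIV. p i * mpow A n i k) * A k j)"
    by (simp add: sum_distrib_left sum_distrib_right mult.assoc) (rule sum.swap)
  with assms Suc show ?case by (simp add: invariant_prob_def)
qed

lemma mpow_add_ge_mult: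
  assumes "\<And>i j. 0 \<le> A i j"
  shows "mpow A a i k * mpow A b k j \<le> mpow A (a + b) i j"
  unfolding mpow_add by (rule member_le_sum) (simp_all add: mpow_nonneg assms)

lemma mpow_add_pos:
  assumes "\<And>i j. 0 \<le> A i j" "0 < mpow A a i k" "0 < mpow A b k j"
  shows "0 < mpow A (a + b) i j"
  by (rule less_le_trans[OF mult_pos_pos[OF assms(2,3)] mpow_add_ge_mult[OF assms(1)]])

lemma invariant_prob_pos:
  assumes p: "invariant_prob A p" and A: "\<And>i j. 0 \<le> A i j" and pos: "\<And>i j. 0 < mpow A m i j"
  shows "0 < p j"
proof -
  note p_nonneg = invariant_prob_nonneg[OF p]
  have "(\<Sum>i\<in>UNIV. p i) \<noteq> 0" using invariant_prob_sum[OF p] by simp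
  then obtain i where "p i \<noteq> 0" by (blast elim: sum.not_neutral_contains_not_neutral)
  with p_nonneg[of i] pos[of i j] have "0 < p i * mpow A m i j" by simp
  also have "\<dots> \<le> (\<Sum>i\<in>UNIV. p i * mpow A m i j)"
    using p_nonneg mpow_nonneg[of A, OF A] by (intro member_le_sum) simp_all
  also have "\<dots> = p j" using p by (rule invariant_prob_mpow)
  finally show ?thesis .
qed

section \<open>Primitive matrices\<close>

lemma diff_closed_dvd_least_pos:
  fixes D :: "int set"
  assumes diff: "\<And>x y. x \<in> D \<Longrightarrow> y \<in> D \<Longrightarrow> x - y \<in> D"
    and d: "0 < d" "d \<in> D" and least: "\<And>e. 0 < e \<Longrightarrow> e < d \<Longrightarrow> e \<notin> D" and "x \<in> D"
  shows "d dvd x"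
proof -
  have "0 \<in> D" using diff[OF d(2) d(2)] by simp
  have mult: "k * d \<in> D" for k
  proof (induction k rule: int_induct[where k=0])
    case base show ?case using \<open>0 \<in> D\<close> by simp
  next
    case (step1 i) show ?case using diff[OF step1(2) diff[OF \<open>0 \<in> D\<close> d(2)]] by (simp add: algebra_simps)
  next
    case (step2 i) show ?case using diff[OF step2(2) d(2)] by (simp add: algebra_simps)
  qed
  have "x mod d \<in> D"
    using diff[OF \<open>x \<in> D\<close> mult[of "x div d"]] by (simp add: minus_div_mult_eq_mod)
  moreover have "0 \<le> x mod d" "x mod d < d" using d(1) by simp_all
  ultimately have "x mod d = 0" using least[of "x mod d"] by fastforce
  then show ?thesis by presburger
qed

lemma add_closed_Gcd_eq_1_consecutive:
  fixes S :: "nat set"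
  assumes add: "\<And>a b. a \<in> S \<Longrightarrow> b \<in> S \<Longrightarrow> a + b \<in> S" and gcd: "Gcd S = 1"
  obtains q where "0 < q" "q \<in> S" "Suc q \<in> S"
proof -
  define D where "D = {int a - int b | a b. a \<in> S \<and> b \<in> S}"
  have D_I: "int a - int b \<in> D" if "a \<in> S" "b \<in> S" for a b
    using that unfolding D_def by blast
  have D_diff: "x - y \<in> D" if "x \<in> D" "y \<in> D" for x y
  proof -
    from that obtain a b a' b' where "x = int a - int b" "y = int a' - int b'"
      and S: "a \<in> S" "b \<in> S" "a' \<in> S" "b' \<in> S" unfolding D_def by blast
    then have "x - y = int (a + b') - int (b + a')" by simp
    with D_I[OF add[OF S(1,4)] add[OF S(2,3)]] show ?thesis by simp
  qed
  have S_D: "int a \<in> D" if "a \<in> S" for a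
    using D_I[OF add[OF that that] that] by simp
  have "\<not> S \<subseteq> {0}" using gcd Gcd_0_iff[of S] by simp
  then obtain s where "s \<in> S" "s \<noteq> 0" by blast
  then have D_pos: "\<exists>d::nat. 0 < d \<and> int d \<in> D" using S_D by blast
  define d where "d = (LEAST d::nat. 0 < d \<and> int d \<in> D)"
  have d: "0 < d" "int d \<in> D"
    using LeastI_ex[OF D_pos] unfolding d_def by auto
  have "0 < int d" using d(1) by simp
  have "int d dvd x" if "x \<in> D" for x
  proof (rule diff_closed_dvd_least_pos[OF D_diff \<open>0 < int d\<close> d(2) _ that])
    show "e \<notin> D" if "0 < e" "e < int d" for e
      using not_less_Least[of "nat e" "\<lambda>d. 0 < d \<and> int d \<in> D"] that unfolding d_def[symmetric]
      by simp
  qed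
  then have "d dvd a" if "a \<in> S" for a
    using S_D[OF that] by (metis int_dvd_int_iff)
  then have "d dvd Gcd S" by (rule Gcd_greatest)
  then have "1 \<in> D" using gcd d(2) by simp
  then obtain a b where "a \<in> S" "b \<in> S" "1 = int a - int b"
    unfolding D_def by auto
  moreover from this(3) have "a = Suc b" by simp
  ultimately show ?thesis
    using that[of "a + b"] add[of a b] add[of a a] by simp
qed

lemma add_closed_Gcd_eq_1_eventually:
  fixes S :: "nat set"
  assumes add: "\<And>a b. a \<in> S \<Longrightarrow> b \<in> S \<Longrightarrow> a + b \<in> S" and gcd: "Gcd S = 1"
  shows "eventually (\<lambda>n. n \<in> S) sequentially"
proof -
  obtain q where q: "0 < q" "q \<in> S" "Suc q \<in> S"
    using add_closed_Gcd_eq_1_consecutive[OF add gcd] .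
  define S0 where "S0 = insert 0 S"
  have S0_add: "a + b \<in> S0" if "a \<in> S0" "b \<in> S0" for a b
    using that add unfolding S0_def by auto
  have S0_mult: "k * c \<in> S0" if "c \<in> S0" for k c
  proof (induction k)
    case 0 show ?case by (simp add: S0_def)
  next
    case (Suc k) show ?case using S0_add[OF that Suc.IH] by simp
  qed
  have "n \<in> S" if n: "q * q \<le> n" for n
  proof -
    \<comment> \<open>write n = a q + b with b < q \<le> a; then n = (a - b) q + b (q + 1)\<close>
    define a b where "a = n div q" and "b = n mod q"
    have "q \<le> a" unfolding a_def using div_le_mono[OF n, of q] q(1) by simp
    moreover have "b \<le> q" unfolding b_def using q(1) by simp
    ultimately have "n = (a - b) * q + b * Suc q"
      unfolding a_def b_def by (simp add: diff_mult_distrib algebra_simps)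
    moreover have "(a - b) * q + b * Suc q \<in> S0"
      using q by (intro S0_add[OF S0_mult S0_mult]) (simp_all add: S0_def)
    ultimately show "n \<in> S" using q(1) n unfolding S0_def by auto
  qed
  then show ?thesis unfolding eventually_sequentially by blast
qed

lemma mpow_eventually_pos:
  fixes A :: "'a::finite \<Rightarrow> 'a \<Rightarrow> real"
  assumes nonneg: "\<And>i j. 0 \<le> A i j" and "irreducible_mat A" "aperiodic_mat A"
  shows "eventually (\<lambda>n. \<forall>i j. 0 < mpow A n i j) sequentially"
proof -
  have diag: "eventually (\<lambda>n. 0 < mpow A n i i) sequentially" for i
  proof -
    define S where "S = {n. 0 < n \<and> 0 < mpow A n i i}"
    have "a + b \<in> S" if "a \<in> S" "b \<in> S" for a b
      using that mpow_add_pos[where A=A, OF nonneg, of a i i b i] unfolding S_def by simp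
    moreover have "Gcd S = 1" using \<open>aperiodic_mat A\<close> unfolding aperiodic_mat_def S_def by simp
    ultimately show ?thesis
      using add_closed_Gcd_eq_1_eventually[of S] unfolding S_def by (auto elim: eventually_mono)
  qed
  have "eventually (\<lambda>n. 0 < mpow A n i j) sequentially" for i j
  proof -
    obtain k where k: "0 < mpow A k i j"
      using \<open>irreducible_mat A\<close> unfolding irreducible_mat_def by blast
    obtain N where "\<And>n. N \<le> n \<Longrightarrow> 0 < mpow A n i i"
      using diag[of i] unfolding eventually_sequentially by blast
    then have "0 < mpow A n i j" if "N + k \<le> n" for n
      using mpow_add_pos[OF nonneg _ k, of "n - k" i] that by simp
    then show ?thesis unfolding eventually_sequentially by blast
  qed
  then show ?thesis by (intro eventually_all_finite allI)
qed

lemma mpow_ge_product: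
  fixes R :: "('a::finite \<times> 'b::finite) \<Rightarrow> ('a \<times> 'b) \<Rightarrow> real"
    and P :: "'a \<Rightarrow> 'a \<Rightarrow> real" and Q :: "'b \<Rightarrow> 'b \<Rightarrow> real"
  assumes c: "0 \<le> c" and lower: "\<And>x y x' y'. c * P x x' * Q y y' \<le> R (x, y) (x', y')"
    and P: "\<And>i j. 0 \<le> P i j" and Q: "\<And>i j. 0 \<le> Q i j"
  shows "c ^ n * mpow P n x x' * mpow Q n y y' \<le> mpow R n (x, y) (x', y')"
proof -
  have R_nonneg: "0 \<le> R u v" for u v
    using lower[of "fst u" "fst v" "snd u" "snd v"] c P Q
    by (metis prod.collapse mult_nonneg_nonneg order.trans)
  show ?thesis
  proof (induction n arbitrary: x' y')
    case (Suc n)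
    have "c ^ Suc n * mpow P (Suc n) x x' * mpow Q (Suc n) y y'
        = (\<Sum>a\<in>UNIV. \<Sum>b\<in>UNIV. (c ^ n * mpow P n x a * mpow Q n y b) * (c * P a x' * Q b y'))"
      by (simp add: sum_product sum_distrib_left mult_ac)
    also have "\<dots> \<le> (\<Sum>a\<in>UNIV. \<Sum>b\<in>UNIV. mpow R n (x, y) (a, b) * R (a, b) (x', y'))"
      using Suc.IH lower c P Q
      by (intro sum_mono mult_mono) (simp_all add: mpow_nonneg R_nonneg)
    also have "\<dots> = mpow R (Suc n) (x, y) (x', y')"
      by (simp add: sum_UNIV_pair)
    finally show ?case .
  qed simp
qed

section \<open>Convergence of powers of a primitive stochastic matrix\<close>

lemma stochastic_mult_oscillation_le:
  fixes M :: "'a::finite \<Rightarrow> 'a \<Rightarrow> real"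
  assumes lower: "\<And>u v. \<epsilon> \<le> M u v" and rows: "\<And>u. (\<Sum>v\<in>UNIV. M u v) = 1"
    and osc: "\<And>v1 v2. \<bar>h v1 - h v2\<bar> \<le> D"
  shows "\<bar>(\<Sum>v\<in>UNIV. M u1 v * h v) - (\<Sum>v\<in>UNIV. M u2 v * h v)\<bar> \<le> (1 - real CARD('a) * \<epsilon>) * D"
proof -
  have "Min (range h) \<in> range h" by (rule Min_in) simp_all
  then obtain v0 where v0_Min: "h v0 = Min (range h)" by (metis rangeE)
  have v0: "h v0 \<le> h v" for v unfolding v0_Min by (rule Min_le) simp_all
  \<comment> \<open>split off the part \<open>\<epsilon>\<close> of every row that is common to all rows\<close>
  define r where "r u = (\<Sum>v\<in>UNIV. (M u v - \<epsilon>) * (h v - h v0))" for u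
  have split: "(\<Sum>v\<in>UNIV. M u v * h v) = r u + \<epsilon> * (\<Sum>v\<in>UNIV. h v - h v0) + h v0" for u
  proof -
    have "r u = (\<Sum>v\<in>UNIV. M u v * h v) - h v0 * (\<Sum>v\<in>UNIV. M u v) - \<epsilon> * (\<Sum>v\<in>UNIV. h v - h v0)"
      unfolding r_def by (simp add: algebra_simps sum_subtractf sum.distrib sum_distrib_left sum_distrib_right)
    then show ?thesis using rows[of u] by simp
  qed
  have "0 \<le> r u" for u
    unfolding r_def using lower v0 by (intro sum_nonneg mult_nonneg_nonneg) auto
  moreover have "r u \<le> (1 - real CARD('a) * \<epsilon>) * D" for u
  proof -
    have "r u \<le> (\<Sum>v\<in>UNIV. (M u v - \<epsilon>) * D)"
      unfolding r_def using lower abs_le_D1[OF osc[of _ v0]] by (intro sum_mono mult_left_mono) auto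
    also have "\<dots> = (1 - real CARD('a) * \<epsilon>) * D"
      using rows[of u] by (simp add: sum_distrib_right[symmetric] sum_subtractf)
    finally show ?thesis .
  qed
  ultimately show ?thesis unfolding split by (smt (verit))
qed

lemma mpow_oscillation_le:
  fixes R :: "'a::finite \<Rightarrow> 'a \<Rightarrow> real"
  assumes R: "stochastic R" and m: "0 < m" and lower: "\<And>u v. \<epsilon> \<le> mpow R m u v"
  shows "\<bar>mpow R T u1 v - mpow R T u2 v\<bar> \<le> (1 - real CARD('a) * \<epsilon>) ^ (T div m)"
proof (induction T arbitrary: u1 u2 rule: less_induct)
  case (less T)
  show ?case
  proof (cases "T < m")
    case True
    have "0 \<le> mpow R T u v" "mpow R T u v \<le> 1" for u
      using mpow_nonneg[of R, OF stochastic_nonneg[OF R]] mpow_le_1[OF R] by blast+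
    then show ?thesis using True by (simp add: abs_le_iff add_increasing2 diff_le_eq)
  next
    case False
    have split: "mpow R T u v = (\<Sum>k\<in>UNIV. mpow R m u k * mpow R (T - m) k v)" for u
      using mpow_add[of R m "T - m"] False by simp
    have "\<bar>mpow R T u1 v - mpow R T u2 v\<bar>
      \<le> (1 - real CARD('a) * \<epsilon>) * (1 - real CARD('a) * \<epsilon>) ^ ((T - m) div m)"
      unfolding split using less[of "T - m"] m False
      by (intro stochastic_mult_oscillation_le lower sum_mpow_row[OF R]) simp
    also have "\<dots> = (1 - real CARD('a) * \<epsilon>) ^ (T div m)"
      using m False by (simp add: le_div_geq)
    finally show ?thesis .
  qed
qed

lemma mpow_tendsto_invariant_prob:
  fixes R :: "'a::finite \<Rightarrow> 'a \<Rightarrow> real"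
  assumes R: "stochastic R" and p: "invariant_prob R p" and m: "0 < m"
    and pos: "\<And>u v. 0 < mpow R m u v"
  shows "(\<lambda>T. mpow R T u v) \<longlonglongrightarrow> p v"
proof -
  define \<epsilon> where "\<epsilon> = Min (range (\<lambda>z. mpow R m (fst z) (snd z)))"
  have \<epsilon>: "0 < \<epsilon>" "\<And>u v. \<epsilon> \<le> mpow R m u v"
    unfolding \<epsilon>_def using pos by (auto intro!: Min_le image_eqI[where x="(u, v)" for u v])
  define \<rho> where "\<rho> = 1 - real CARD('a) * \<epsilon>"
  have "real CARD('a) * \<epsilon> \<le> (\<Sum>w\<in>UNIV. mpow R m u w)"
    using sum_mono[of UNIV "\<lambda>_. \<epsilon>" "mpow R m u", OF \<epsilon>(2)] by simp
  then have \<rho>: "0 \<le> \<rho>" "\<rho> < 1"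
    unfolding \<rho>_def using sum_mpow_row[OF R] \<epsilon>(1) by simp_all
  note p_nonneg = invariant_prob_nonneg[OF p] and p_sum = invariant_prob_sum[OF p]
  have bound: "\<bar>mpow R T u v - p v\<bar> \<le> \<rho> ^ (T div m)" for T
  proof -
    \<comment> \<open>\<open>p v\<close> is a convex combination of the entries of column \<open>v\<close> of \<open>R^T\<close>\<close>
    have "mpow R T u v - p v = (\<Sum>w\<in>UNIV. p w * (mpow R T u v - mpow R T w v))"
      using invariant_prob_mpow[OF p, of T v] p_sum
      by (simp add: algebra_simps sum_subtractf sum_distrib_right[symmetric])
    also have "\<bar>\<dots>\<bar> \<le> (\<Sum>w\<in>UNIV. p w * \<rho> ^ (T div m))"
      using mpow_oscillation_le[OF R m \<epsilon>(2)] p_nonneg unfolding \<rho>_def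
      by (intro order.trans[OF sum_abs] sum_mono) (simp add: abs_mult mult_left_mono)
    finally show ?thesis by (simp add: p_sum sum_distrib_right[symmetric])
  qed
  have "(\<lambda>k. \<rho> ^ k) \<longlonglongrightarrow> 0"
    using \<rho> by (intro LIMSEQ_power_zero) simp
  then have "(\<lambda>T. \<rho> ^ (T div m)) \<longlonglongrightarrow> 0"
    by (rule filterlim_compose[OF _ filterlim_at_top_div_const_nat[OF m]])
  have "(\<lambda>T. mpow R T u v - p v) \<longlonglongrightarrow> 0"
  proof (rule Lim_null_comparison)
    show "eventually (\<lambda>T. norm (mpow R T u v - p v) \<le> \<rho> ^ (T div m)) sequentially"
      using bound by simp
  qed fact
  then show ?thesis by (simp add: LIM_zero_iff)
qed

section \<open>Gibbs' inequality\<close>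

lemma mult_ln_diff_le:
  fixes a b :: real
  assumes "0 \<le> a" "0 \<le> b" "0 < a \<Longrightarrow> 0 < b"
  shows "a * (ln b - ln a) \<le> b - a" and "a \<noteq> b \<Longrightarrow> a * (ln b - ln a) < b - a"
proof -
  show "a * (ln b - ln a) \<le> b - a"
  proof (cases "a = 0")
    case False
    then have "a * (ln b - ln a) \<le> a * ((b - a) / a)"
      using assms ln_diff_le[of b a] by (intro mult_left_mono) simp_all
    with False show ?thesis by simp
  qed (use assms in simp)
  show "a * (ln b - ln a) < b - a" if "a \<noteq> b"
  proof (cases "a = 0")
    case False
    then have "a * (ln b - ln a) < a * ((b - a) / a)"
      using assms that ln_diff_less[of b a] by (intro mult_strict_left_mono) simp_all
    with False show ?thesis by simp
  qed (use assms that in simp)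
qed

lemma gibbs_inequality:
  fixes a b :: "'a::finite \<Rightarrow> real"
  assumes nonneg: "\<And>v. 0 \<le> a v" "\<And>v. 0 \<le> b v" and support: "\<And>v. 0 < a v \<Longrightarrow> 0 < b v"
    and sums: "(\<Sum>v\<in>UNIV. a v) = (\<Sum>v\<in>UNIV. b v)"
  shows "(\<Sum>v\<in>UNIV. a v * ln (b v)) \<le> (\<Sum>v\<in>UNIV. a v * ln (a v))"
    and "a \<noteq> b \<Longrightarrow> (\<Sum>v\<in>UNIV. a v * ln (b v)) < (\<Sum>v\<in>UNIV. a v * ln (a v))"
proof -
  have pointwise: "a v * (ln (b v) - ln (a v)) \<le> b v - a v"
      "a v \<noteq> b v \<Longrightarrow> a v * (ln (b v) - ln (a v)) < b v - a v" for v
    using mult_ln_diff_le[of "a v" "b v"] nonneg support by simp_all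
  have diff: "(\<Sum>v\<in>UNIV. a v * ln (b v)) - (\<Sum>v\<in>UNIV. a v * ln (a v))
      = (\<Sum>v\<in>UNIV. a v * (ln (b v) - ln (a v)))"
    by (simp add: sum_subtractf right_diff_distrib)
  have zero: "(\<Sum>v\<in>UNIV. b v - a v) = 0" using sums by (simp add: sum_subtractf)
  have "(\<Sum>v\<in>UNIV. a v * (ln (b v) - ln (a v))) \<le> (\<Sum>v\<in>UNIV. b v - a v)"
    using pointwise(1) by (rule sum_mono)
  with diff zero show "(\<Sum>v\<in>UNIV. a v * ln (b v)) \<le> (\<Sum>v\<in>UNIV. a v * ln (a v))" by simp
  assume "a \<noteq> b"
  then obtain v0 where "a v0 \<noteq> b v0" by blast
  then have "(\<Sum>v\<in>UNIV. a v * (ln (b v) - ln (a v))) < (\<Sum>v\<in>UNIV. b v - a v)"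
    using pointwise by (intro sum_strict_mono_ex1) auto
  with diff zero show "(\<Sum>v\<in>UNIV. a v * ln (b v)) < (\<Sum>v\<in>UNIV. a v * ln (a v))" by simp
qed

lemma gibbs_inequality_rows:
  fixes a b :: "'a::finite \<Rightarrow> 'b::finite \<Rightarrow> real"
  assumes nonneg: "\<And>u v. 0 \<le> a u v" "\<And>u v. 0 \<le> b u v"
    and support: "\<And>u v. 0 < a u v \<Longrightarrow> 0 < b u v"
    and sums: "\<And>u. (\<Sum>v\<in>UNIV. a u v) = (\<Sum>v\<in>UNIV. b u v)" and c: "\<And>u. 0 < c u"
  shows "(\<Sum>u\<in>UNIV. \<Sum>v\<in>UNIV. c u * a u v * ln (b u v))
      \<le> (\<Sum>u\<in>UNIV. \<Sum>v\<in>UNIV. c u * a u v * ln (a u v))"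
    and "a \<noteq> b \<Longrightarrow> (\<Sum>u\<in>UNIV. \<Sum>v\<in>UNIV. c u * a u v * ln (b u v))
      < (\<Sum>u\<in>UNIV. \<Sum>v\<in>UNIV. c u * a u v * ln (a u v))"
proof -
  have row: "(\<Sum>v\<in>UNIV. c u * a u v * ln (b u v)) \<le> (\<Sum>v\<in>UNIV. c u * a u v * ln (a u v))"
    "a u \<noteq> b u \<Longrightarrow> (\<Sum>v\<in>UNIV. c u * a u v * ln (b u v)) < (\<Sum>v\<in>UNIV. c u * a u v * ln (a u v))"
    for u
    using gibbs_inequality[of "a u" "b u"] nonneg support sums[of u] c[of u]
    by (simp_all add: mult.assoc flip: sum_distrib_left)
  show "(\<Sum>u\<in>UNIV. \<Sum>v\<in>UNIV. c u * a u v * ln (b u v))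
      \<le> (\<Sum>u\<in>UNIV. \<Sum>v\<in>UNIV. c u * a u v * ln (a u v))"
    using row(1) by (rule sum_mono)
  assume "a \<noteq> b"
  then obtain u0 where "a u0 \<noteq> b u0" by blast
  with row show "(\<Sum>u\<in>UNIV. \<Sum>v\<in>UNIV. c u * a u v * ln (b u v))
      < (\<Sum>u\<in>UNIV. \<Sum>v\<in>UNIV. c u * a u v * ln (a u v))"
    by (intro sum_strict_mono_ex1) auto
qed

section \<open>Coordinate marginals of edge measures\<close>

text \<open>For a stationary chain \<open>(X_n, Y_n)\<close> with transition matrix \<open>R\<close> and law \<open>p\<close>,
  \<open>edge_measure p R\<close> is the law of the pair of consecutive states, its \<open>fst_marginal\<close> and
  \<open>snd_marginal\<close> are the laws of \<open>(X_0, X_1)\<close> and \<open>(Y_0, Y_1)\<close>, and \<open>fst_kernel\<close>, \<open>snd_kernel\<close>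
  are the transition matrices of the coordinate processes.\<close>

definition edge_measure :: "('a \<Rightarrow> real) \<Rightarrow> ('a \<Rightarrow> 'a \<Rightarrow> real) \<Rightarrow> 'a \<Rightarrow> 'a \<Rightarrow> real" where
  "edge_measure p R u v = p u * R u v"

definition fst_marginal :: "('a \<times> 'b::finite \<Rightarrow> 'a \<times> 'b \<Rightarrow> real) \<Rightarrow> 'a \<Rightarrow> 'a \<Rightarrow> real" where
  "fst_marginal w x x' = (\<Sum>y\<in>UNIV. \<Sum>y'\<in>UNIV. w (x, y) (x', y'))"

definition snd_marginal :: "('a::finite \<times> 'b \<Rightarrow> 'a \<times> 'b \<Rightarrow> real) \<Rightarrow> 'b \<Rightarrow> 'b \<Rightarrow> real" where
  "snd_marginal w y y' = (\<Sum>x\<in>UNIV. \<Sum>x'\<in>UNIV. w (x, y) (x', y'))"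

definition marginal_product ::
    "('a::finite \<times> 'b::finite \<Rightarrow> 'a \<times> 'b \<Rightarrow> real) \<Rightarrow> 'a \<times> 'b \<Rightarrow> 'a \<times> 'b \<Rightarrow> real" where
  "marginal_product w u v = fst_marginal w (fst u) (fst v) * snd_marginal w (snd u) (snd v)"

lemma sum_fst_marginal:
  fixes w :: "'a::finite \<times> 'b::finite \<Rightarrow> 'a \<times> 'b \<Rightarrow> real"
  shows "(\<Sum>u\<in>UNIV. \<Sum>v\<in>UNIV. w u v * h (fst u) (fst v))
    = (\<Sum>x\<in>UNIV. \<Sum>x'\<in>UNIV. fst_marginal w x x' * h x x')"
proof -
  have "(\<Sum>u\<in>UNIV. \<Sum>v\<in>UNIV. w u v * h (fst u) (fst v))
      = (\<Sum>x\<in>UNIV. \<Sum>y\<in>UNIV. \<Sum>x'\<in>UNIV. \<Sum>y'\<in>UNIV. w (x, y) (x', y') * h x x')"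
    by (simp add: sum_UNIV_pair)
  also have "\<dots> = (\<Sum>x\<in>UNIV. \<Sum>x'\<in>UNIV. \<Sum>y\<in>UNIV. \<Sum>y'\<in>UNIV. w (x, y) (x', y') * h x x')"
    by (intro sum.cong refl sum.swap)
  finally show ?thesis by (simp add: fst_marginal_def sum_distrib_right)
qed

lemma sum_snd_marginal:
  fixes w :: "'a::finite \<times> 'b::finite \<Rightarrow> 'a \<times> 'b \<Rightarrow> real"
  shows "(\<Sum>u\<in>UNIV. \<Sum>v\<in>UNIV. w u v * h (snd u) (snd v))
    = (\<Sum>y\<in>UNIV. \<Sum>y'\<in>UNIV. snd_marginal w y y' * h y y')"
proof -
  have "(\<Sum>u\<in>UNIV. \<Sum>v\<in>UNIV. w u v * h (snd u) (snd v))
      = (\<Sum>x\<in>UNIV. \<Sum>y\<in>UNIV. \<Sum>x'\<in>UNIV. \<Sum>y'\<in>UNIV. w (x, y) (x', y') * h y y')"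
    by (simp add: sum_UNIV_pair)
  also have "\<dots> = (\<Sum>y\<in>UNIV. \<Sum>y'\<in>UNIV. \<Sum>x\<in>UNIV. \<Sum>x'\<in>UNIV. w (x, y) (x', y') * h y y')"
    by (subst sum.swap) (intro sum.cong refl, subst sum.swap, intro sum.cong refl sum.swap)
  finally show ?thesis by (simp add: snd_marginal_def sum_distrib_right)
qed

lemma le_fst_marginal:
  assumes "\<And>u v. 0 \<le> w u v" shows "w u v \<le> fst_marginal w (fst u) (fst v)"
proof -
  obtain x y x' y' where uv: "u = (x, y)" "v = (x', y')" by (cases u, cases v) auto
  have "w (x, y) (x', y') \<le> (\<Sum>y'\<in>UNIV. w (x, y) (x', y'))"
    by (rule member_le_sum) (simp_all add: assms)
  also have "\<dots> \<le> (\<Sum>y\<in>UNIV. \<Sum>y'\<in>UNIV. w (x, y) (x', y'))"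
    by (rule member_le_sum) (simp_all add: assms sum_nonneg)
  finally show ?thesis unfolding uv fst_marginal_def by simp
qed

lemma le_snd_marginal:
  assumes "\<And>u v. 0 \<le> w u v" shows "w u v \<le> snd_marginal w (snd u) (snd v)"
proof -
  obtain x y x' y' where uv: "u = (x, y)" "v = (x', y')" by (cases u, cases v) auto
  have "w (x, y) (x', y') \<le> (\<Sum>x'\<in>UNIV. w (x, y) (x', y'))"
    by (rule member_le_sum) (simp_all add: assms)
  also have "\<dots> \<le> (\<Sum>x\<in>UNIV. \<Sum>x'\<in>UNIV. w (x, y) (x', y'))"
    by (rule member_le_sum) (simp_all add: assms sum_nonneg)
  finally show ?thesis unfolding uv snd_marginal_def by simp
qed

lemma sum_fst_marginal_row:
  fixes w :: "'a::finite \<times> 'b::finite \<Rightarrow> 'a \<times> 'b \<Rightarrow> real"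
  shows "(\<Sum>x'\<in>UNIV. fst_marginal w x x') = (\<Sum>y\<in>UNIV. \<Sum>v\<in>UNIV. w (x, y) v)"
  unfolding fst_marginal_def by (rule trans[OF sum.swap]) (simp add: sum_UNIV_pair)

lemma sum_fst_marginal_col:
  fixes w :: "'a::finite \<times> 'b::finite \<Rightarrow> 'a \<times> 'b \<Rightarrow> real"
  shows "(\<Sum>x\<in>UNIV. fst_marginal w x x') = (\<Sum>y'\<in>UNIV. \<Sum>u\<in>UNIV. w u (x', y'))"
proof -
  have "(\<Sum>y'\<in>UNIV. \<Sum>u\<in>UNIV. w u (x', y')) = (\<Sum>u\<in>UNIV. \<Sum>y'\<in>UNIV. w u (x', y'))"
    by (rule sum.swap)
  then show ?thesis unfolding fst_marginal_def by (simp add: sum_UNIV_pair)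
qed

lemma sum_snd_marginal_row:
  fixes w :: "'a::finite \<times> 'b::finite \<Rightarrow> 'a \<times> 'b \<Rightarrow> real"
  shows "(\<Sum>y'\<in>UNIV. snd_marginal w y y') = (\<Sum>x\<in>UNIV. \<Sum>v\<in>UNIV. w (x, y) v)"
proof -
  have "(\<Sum>y'\<in>UNIV. snd_marginal w y y') = (\<Sum>x\<in>UNIV. \<Sum>y'\<in>UNIV. \<Sum>x'\<in>UNIV. w (x, y) (x', y'))"
    unfolding snd_marginal_def by (rule sum.swap)
  also have "\<dots> = (\<Sum>x\<in>UNIV. \<Sum>x'\<in>UNIV. \<Sum>y'\<in>UNIV. w (x, y) (x', y'))"
    by (intro sum.cong refl sum.swap)
  finally show ?thesis by (simp add: sum_UNIV_pair)
qed

lemma sum_snd_marginal_col: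
  fixes w :: "'a::finite \<times> 'b::finite \<Rightarrow> 'a \<times> 'b \<Rightarrow> real"
  shows "(\<Sum>y\<in>UNIV. snd_marginal w y y') = (\<Sum>x'\<in>UNIV. \<Sum>u\<in>UNIV. w u (x', y'))"
proof -
  have "(\<Sum>y\<in>UNIV. snd_marginal w y y') = (\<Sum>x\<in>UNIV. \<Sum>y\<in>UNIV. \<Sum>x'\<in>UNIV. w (x, y) (x', y'))"
    unfolding snd_marginal_def by (rule sum.swap)
  also have "\<dots> = (\<Sum>u\<in>UNIV. \<Sum>x'\<in>UNIV. w u (x', y'))"
    by (simp add: sum_UNIV_pair)
  also have "\<dots> = (\<Sum>x'\<in>UNIV. \<Sum>u\<in>UNIV. w u (x', y'))"
    by (rule sum.swap)
  finally show ?thesis .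
qed

lemma sum_edge_measure_row: "stochastic R \<Longrightarrow> (\<Sum>v\<in>UNIV. edge_measure p R u v) = p u"
  by (simp add: edge_measure_def stochastic_def flip: sum_distrib_left)

lemma sum_edge_measure_col: "invariant_prob R p \<Longrightarrow> (\<Sum>u\<in>UNIV. edge_measure p R u v) = p v"
  by (simp add: edge_measure_def invariant_prob_def)

lemma sum_marginal_product_row:
  "(\<Sum>v\<in>UNIV. marginal_product w u v)
    = (\<Sum>x'\<in>UNIV. fst_marginal w (fst u) x') * (\<Sum>y'\<in>UNIV. snd_marginal w (snd u) y')"
  by (simp add: marginal_product_def sum_UNIV_pair sum_product)

lemma sum_marginal_product_col:
  "(\<Sum>u\<in>UNIV. marginal_product w u v)
    = (\<Sum>x\<in>UNIV. fst_marginal w x (fst v)) * (\<Sum>y\<in>UNIV. snd_marginal w y (snd v))"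
  by (simp add: marginal_product_def sum_UNIV_pair sum_product)

lemma fst_marginal_marginal_product:
  "fst_marginal (marginal_product w) x x'
    = fst_marginal w x x' * (\<Sum>y\<in>UNIV. \<Sum>y'\<in>UNIV. snd_marginal w y y')"
  by (simp add: fst_marginal_def[of "marginal_product w"] marginal_product_def sum_distrib_left)

lemma snd_marginal_marginal_product:
  "snd_marginal (marginal_product w) y y'
    = snd_marginal w y y' * (\<Sum>x\<in>UNIV. \<Sum>x'\<in>UNIV. fst_marginal w x x')"
  by (simp add: snd_marginal_def[of "marginal_product w"] marginal_product_def sum_distrib_left
      mult.commute[of "snd_marginal w y y'"])

lemma marginal_product_edge_measure_imp_pos:
  fixes R :: "'a::finite \<times> 'b::finite \<Rightarrow> 'a \<times> 'b \<Rightarrow> real"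
  assumes R_nonneg: "\<And>u v. 0 \<le> R u v"
    and support: "\<And>x y x' y'. 0 < R (x, y) (x', y') \<longleftrightarrow> A x x' \<and> B y y'"
    and nonzero: "marginal_product (edge_measure p R) u v \<noteq> 0"
  shows "0 < R u v"
proof -
  have pos: "0 < R u' v'" if "edge_measure p R u' v' \<noteq> 0" for u' v'
    using that R_nonneg[of u' v'] unfolding edge_measure_def by fastforce
  have "fst_marginal (edge_measure p R) (fst u) (fst v) \<noteq> 0"
    using nonzero unfolding marginal_product_def by simp
  then obtain y y' where "edge_measure p R (fst u, y) (fst v, y') \<noteq> 0"
    unfolding fst_marginal_def by (blast elim: sum.not_neutral_contains_not_neutral)
  then have "A (fst u) (fst v)" using pos support by blast
  have "snd_marginal (edge_measure p R) (snd u) (snd v) \<noteq> 0"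
    using nonzero unfolding marginal_product_def by simp
  then obtain x x' where "edge_measure p R (x, snd u) (x', snd v) \<noteq> 0"
    unfolding snd_marginal_def by (blast elim: sum.not_neutral_contains_not_neutral)
  then have "B (snd u) (snd v)" using pos support by blast
  with \<open>A (fst u) (fst v)\<close> show ?thesis
    using support[of "fst u" "snd u" "fst v" "snd v"] by simp
qed

lemma sum_ln_product_kernel:
  fixes w :: "'a::finite \<times> 'b::finite \<Rightarrow> 'a \<times> 'b \<Rightarrow> real"
  assumes w: "\<And>u v. 0 \<le> w u v"
    and KX: "\<And>x x'. 0 < fst_marginal w x x' \<Longrightarrow> 0 < KX x x'"
    and KY: "\<And>y y'. 0 < snd_marginal w y y' \<Longrightarrow> 0 < KY y y'"
  shows "(\<Sum>u\<in>UNIV. \<Sum>v\<in>UNIV. w u v * ln (KX (fst u) (fst v) * KY (snd u) (snd v)))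
    = (\<Sum>x\<in>UNIV. \<Sum>x'\<in>UNIV. fst_marginal w x x' * ln (KX x x'))
      + (\<Sum>y\<in>UNIV. \<Sum>y'\<in>UNIV. snd_marginal w y y' * ln (KY y y'))"
proof -
  have "w u v * ln (KX (fst u) (fst v) * KY (snd u) (snd v))
      = w u v * ln (KX (fst u) (fst v)) + w u v * ln (KY (snd u) (snd v))" for u v
  proof (cases "w u v = 0")
    case False
    then have "0 < w u v" using w[of u v] by simp
    then have "0 < KX (fst u) (fst v)" "0 < KY (snd u) (snd v)"
      using KX KY le_fst_marginal[of w, OF w, of u v] le_snd_marginal[of w, OF w, of u v] by simp_all
    then show ?thesis by (simp add: ln_mult distrib_left)
  qed simp
  then show ?thesis
    by (simp add: sum.distrib sum_fst_marginal[of w "\<lambda>x x'. ln (KX x x')"]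
        sum_snd_marginal[of w "\<lambda>y y'. ln (KY y y')"])
qed

lemma fst_marginal_nonneg: "(\<And>u v. 0 \<le> w u v) \<Longrightarrow> 0 \<le> fst_marginal w x x'"
  by (simp add: fst_marginal_def sum_nonneg)

lemma snd_marginal_nonneg: "(\<And>u v. 0 \<le> w u v) \<Longrightarrow> 0 \<le> snd_marginal w y y'"
  by (simp add: snd_marginal_def sum_nonneg)

lemma edge_measure_nonneg: "stochastic R \<Longrightarrow> (\<And>u. 0 \<le> p u) \<Longrightarrow> 0 \<le> edge_measure p R u v"
  by (simp add: edge_measure_def stochastic_nonneg)

lemma sum_fst_marginal_edge_measure_row:
  fixes R :: "'a::finite \<times> 'b::finite \<Rightarrow> 'a \<times> 'b \<Rightarrow> real"
  assumes "stochastic R"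
  shows "(\<Sum>x'\<in>UNIV. fst_marginal (edge_measure p R) x x') = (\<Sum>y\<in>UNIV. p (x, y))"
  by (simp add: sum_fst_marginal_row sum_edge_measure_row[OF assms])

lemma sum_snd_marginal_edge_measure_row:
  fixes R :: "'a::finite \<times> 'b::finite \<Rightarrow> 'a \<times> 'b \<Rightarrow> real"
  assumes "stochastic R"
  shows "(\<Sum>y'\<in>UNIV. snd_marginal (edge_measure p R) y y') = (\<Sum>x\<in>UNIV. p (x, y))"
  by (simp add: sum_snd_marginal_row sum_edge_measure_row[OF assms])

lemma marginals_marginal_product_edge_measure:
  fixes R :: "'a::finite \<times> 'b::finite \<Rightarrow> 'a \<times> 'b \<Rightarrow> real"
  assumes R: "stochastic R" and p: "invariant_prob R p"
  shows "fst_marginal (marginal_product (edge_measure p R)) = fst_marginal (edge_measure p R)"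
    and "snd_marginal (marginal_product (edge_measure p R)) = snd_marginal (edge_measure p R)"
proof -
  note invariant_prob_sum[OF p]
  moreover have "(\<Sum>y\<in>UNIV. \<Sum>x\<in>UNIV. p (x, y)) = (\<Sum>u\<in>UNIV. p u)"
    by (subst sum.swap) (simp add: sum_UNIV_pair)
  ultimately have "(\<Sum>x\<in>UNIV. \<Sum>x'\<in>UNIV. fst_marginal (edge_measure p R) x x') = 1"
    "(\<Sum>y\<in>UNIV. \<Sum>y'\<in>UNIV. snd_marginal (edge_measure p R) y y') = 1"
    by (simp_all add: sum_fst_marginal_edge_measure_row[OF R] sum_snd_marginal_edge_measure_row[OF R]
        flip: sum_UNIV_pair)
  then show "fst_marginal (marginal_product (edge_measure p R)) = fst_marginal (edge_measure p R)"
    and "snd_marginal (marginal_product (edge_measure p R)) = snd_marginal (edge_measure p R)"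
    by (simp_all add: fun_eq_iff fst_marginal_marginal_product snd_marginal_marginal_product)
qed

lemma sum_marginal_product_edge_measure_row:
  fixes R :: "'a::finite \<times> 'b::finite \<Rightarrow> 'a \<times> 'b \<Rightarrow> real"
  assumes "stochastic R"
  shows "(\<Sum>v\<in>UNIV. marginal_product (edge_measure p R) u v)
    = (\<Sum>y\<in>UNIV. p (fst u, y)) * (\<Sum>x\<in>UNIV. p (x, snd u))"
  by (simp add: sum_marginal_product_row sum_fst_marginal_edge_measure_row[OF assms]
      sum_snd_marginal_edge_measure_row[OF assms])

lemma sum_marginal_product_edge_measure_col:
  fixes R :: "'a::finite \<times> 'b::finite \<Rightarrow> 'a \<times> 'b \<Rightarrow> real"
  assumes "invariant_prob R p"
  shows "(\<Sum>u\<in>UNIV. marginal_product (edge_measure p R) u v)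
    = (\<Sum>y\<in>UNIV. p (fst v, y)) * (\<Sum>x\<in>UNIV. p (x, snd v))"
  by (simp add: sum_marginal_product_col sum_fst_marginal_col sum_snd_marginal_col
      sum_edge_measure_col[OF assms])

lemma sum_marginal_product_ln_product_kernel:
  fixes R :: "'a::finite \<times> 'b::finite \<Rightarrow> 'a \<times> 'b \<Rightarrow> real"
  assumes R: "stochastic R" and p: "invariant_prob R p"
    and KX: "\<And>x x'. 0 < fst_marginal (edge_measure p R) x x' \<Longrightarrow> 0 < KX x x'"
    and KY: "\<And>y y'. 0 < snd_marginal (edge_measure p R) y y' \<Longrightarrow> 0 < KY y y'"
  shows "(\<Sum>u\<in>UNIV. \<Sum>v\<in>UNIV. marginal_product (edge_measure p R) u v
            * ln (KX (fst u) (fst v) * KY (snd u) (snd v)))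
    = (\<Sum>u\<in>UNIV. \<Sum>v\<in>UNIV. edge_measure p R u v * ln (KX (fst u) (fst v) * KY (snd u) (snd v)))"
proof -
  have \<nu>: "0 \<le> edge_measure p R u v" for u v
    using invariant_prob_nonneg[OF p] by (rule edge_measure_nonneg[OF R])
  then have "0 \<le> marginal_product (edge_measure p R) u v" for u v
    by (simp add: marginal_product_def fst_marginal_nonneg snd_marginal_nonneg)
  from sum_ln_product_kernel[of "marginal_product (edge_measure p R)" KX KY, OF this,
      unfolded marginals_marginal_product_edge_measure[OF R p], OF KX KY]
    sum_ln_product_kernel[of "edge_measure p R" KX KY, OF \<nu> KX KY]
  show ?thesis by simp
qed

definition fst_kernel ::
    "('a::finite \<times> 'b::finite \<Rightarrow> real) \<Rightarrow> ('a \<times> 'b \<Rightarrow> 'a \<times> 'b \<Rightarrow> real) \<Rightarrow> 'a \<Rightarrow> 'a \<Rightarrow> real"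
  where "fst_kernel p R x x' = fst_marginal (edge_measure p R) x x' / (\<Sum>y\<in>UNIV. p (x, y))"

definition snd_kernel ::
    "('a::finite \<times> 'b::finite \<Rightarrow> real) \<Rightarrow> ('a \<times> 'b \<Rightarrow> 'a \<times> 'b \<Rightarrow> real) \<Rightarrow> 'b \<Rightarrow> 'b \<Rightarrow> real"
  where "snd_kernel p R y y' = snd_marginal (edge_measure p R) y y' / (\<Sum>x\<in>UNIV. p (x, y))"

lemma fst_kernel_pos_iff:
  assumes "\<And>u. 0 < p u"
  shows "0 < fst_kernel p R x x' \<longleftrightarrow> 0 < fst_marginal (edge_measure p R) x x'"
proof -
  have "0 < (\<Sum>y\<in>UNIV. p (x, y))" using assms by (simp add: sum_pos)
  then show ?thesis by (simp add: fst_kernel_def zero_less_divide_iff)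
qed

lemma snd_kernel_pos_iff:
  assumes "\<And>u. 0 < p u"
  shows "0 < snd_kernel p R y y' \<longleftrightarrow> 0 < snd_marginal (edge_measure p R) y y'"
proof -
  have "0 < (\<Sum>x\<in>UNIV. p (x, y))" using assms by (simp add: sum_pos)
  then show ?thesis by (simp add: snd_kernel_def zero_less_divide_iff)
qed

lemma stochastic_fst_kernel:
  assumes R: "stochastic R" and p: "\<And>u. 0 < p u"
  shows "stochastic (fst_kernel p R)"
proof -
  have pos: "0 < (\<Sum>y\<in>UNIV. p (x, y))" for x using p by (simp add: sum_pos)
  have "0 \<le> fst_marginal (edge_measure p R) x x'" for x x'
    using edge_measure_nonneg[OF R] p by (simp add: fst_marginal_nonneg less_imp_le)
  with pos show ?thesis
    unfolding stochastic_def fst_kernel_def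
    by (simp add: sum_fst_marginal_edge_measure_row[OF R] divide_nonneg_pos less_imp_neq[OF pos, symmetric]
        flip: sum_divide_distrib)
qed

lemma stochastic_snd_kernel:
  assumes R: "stochastic R" and p: "\<And>u. 0 < p u"
  shows "stochastic (snd_kernel p R)"
proof -
  have pos: "0 < (\<Sum>x\<in>UNIV. p (x, y))" for y using p by (simp add: sum_pos)
  have "0 \<le> snd_marginal (edge_measure p R) y y'" for y y'
    using edge_measure_nonneg[OF R] p by (simp add: snd_marginal_nonneg less_imp_le)
  with pos show ?thesis
    unfolding stochastic_def snd_kernel_def
    by (simp add: sum_snd_marginal_edge_measure_row[OF R] divide_nonneg_pos less_imp_neq[OF pos, symmetric]
        flip: sum_divide_distrib)
qed

lemma stochastic_product:
  assumes "stochastic A" "stochastic B"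
  shows "stochastic (\<lambda>u v. A (fst u) (fst v) * B (snd u) (snd v))"
  using assms by (simp add: stochastic_def sum_UNIV_pair flip: sum_product)

lemma marginal_product_edge_measure_eq:
  assumes "\<And>u. 0 < p u"
  shows "marginal_product (edge_measure p R) u v = (\<Sum>y\<in>UNIV. p (fst u, y)) * (\<Sum>x\<in>UNIV. p (x, snd u))
    * (fst_kernel p R (fst u) (fst v) * snd_kernel p R (snd u) (snd v))"
proof -
  have "0 < (\<Sum>y\<in>UNIV. p (fst u, y))" "0 < (\<Sum>x\<in>UNIV. p (x, snd u))"
    using assms by (simp_all add: sum_pos)
  then show ?thesis by (simp add: marginal_product_def fst_kernel_def snd_kernel_def)
qed

lemma sum_marginal_product_ln_less:
  fixes R :: "'a::finite \<times> 'b::finite \<Rightarrow> 'a \<times> 'b \<Rightarrow> real"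
  assumes R: "stochastic R" and p: "invariant_prob R p" and p_pos: "\<And>u. 0 < p u"
    and support: "\<And>x y x' y'. 0 < R (x, y) (x', y') \<longleftrightarrow> A x x' \<and> B y y'"
    and not_product: "\<nexists>KX KY. \<forall>u v. R u v = KX (fst u) (fst v) * KY (snd u) (snd v)"
  shows "(\<Sum>u\<in>UNIV. \<Sum>v\<in>UNIV. marginal_product (edge_measure p R) u v * ln (R u v))
    < (\<Sum>u\<in>UNIV. \<Sum>v\<in>UNIV. edge_measure p R u v * ln (R u v))"
proof -
  define K where "K u v = fst_kernel p R (fst u) (fst v) * snd_kernel p R (snd u) (snd v)" for u v
  define m where "m u = (\<Sum>y\<in>UNIV. p (fst u, y)) * (\<Sum>x\<in>UNIV. p (x, snd u))" for u
  have K: "stochastic K"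
    unfolding K_def by (intro stochastic_product stochastic_fst_kernel stochastic_snd_kernel R p_pos)
  have m_pos: "0 < m u" for u unfolding m_def using p_pos by (simp add: sum_pos)
  have e_eq: "marginal_product (edge_measure p R) u v = m u * K u v" for u v
    unfolding m_def K_def by (rule marginal_product_edge_measure_eq[of p, OF p_pos])
  have \<nu>_nonneg: "0 \<le> edge_measure p R u v" for u v
    using p_pos by (simp add: edge_measure_nonneg[OF R] less_imp_le)
  have R_imp_K: "0 < K u v" if "0 < R u v" for u v
  proof -
    have "0 < edge_measure p R u v" using that p_pos[of u] by (simp add: edge_measure_def)
    then show ?thesis
      using le_fst_marginal[of "edge_measure p R", OF \<nu>_nonneg, of u v]
        le_snd_marginal[of "edge_measure p R", OF \<nu>_nonneg, of u v]
      by (simp add: K_def fst_kernel_pos_iff[of p, OF p_pos] snd_kernel_pos_iff[of p, OF p_pos])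
  qed
  have K_imp_R: "0 < R u v" if "0 < K u v" for u v
    using that m_pos[of u] e_eq[of u v] stochastic_nonneg[OF R]
    by (intro marginal_product_edge_measure_imp_pos[where R=R and p=p, OF _ support]) auto
  have "R \<noteq> K"
  proof
    assume "R = K"
    then have "\<forall>u v. R u v = fst_kernel p R (fst u) (fst v) * snd_kernel p R (snd u) (snd v)"
      by (simp add: K_def)
    with not_product show False by blast
  qed
  \<comment> \<open>Gibbs' inequality twice, around the product chain \<open>K\<close> with the same coordinate marginals\<close>
  have "(\<Sum>u\<in>UNIV. \<Sum>v\<in>UNIV. marginal_product (edge_measure p R) u v * ln (R u v))
      < (\<Sum>u\<in>UNIV. \<Sum>v\<in>UNIV. marginal_product (edge_measure p R) u v * ln (K u v))"
    using gibbs_inequality_rows(2)[of K R m, OF stochastic_nonneg[OF K] stochastic_nonneg[OF R] K_imp_R]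
      stochastic_row_sum[OF K] stochastic_row_sum[OF R] m_pos \<open>R \<noteq> K\<close> by (simp add: e_eq)
  also have "\<dots> = (\<Sum>u\<in>UNIV. \<Sum>v\<in>UNIV. edge_measure p R u v * ln (K u v))"
    unfolding K_def using fst_kernel_pos_iff[of p, OF p_pos] snd_kernel_pos_iff[of p, OF p_pos]
    by (intro sum_marginal_product_ln_product_kernel[OF R p]) simp_all
  also have "\<dots> \<le> (\<Sum>u\<in>UNIV. \<Sum>v\<in>UNIV. edge_measure p R u v * ln (R u v))"
    using gibbs_inequality_rows(1)[of R K p, OF stochastic_nonneg[OF R] stochastic_nonneg[OF K] R_imp_K]
      stochastic_row_sum[OF K] stochastic_row_sum[OF R] p_pos by (simp add: edge_measure_def)
  finally show ?thesis .
qed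

section \<open>The tilted kernel\<close>

lemma Rstar_eq:
  "Rstar P Q f \<theta> r (x, y) (x', y') = r (x', y') / r (x, y) * exp (\<theta> * of_int (f x' y')) * P x x' * Q y y'"
  by (simp add: Rstar_def Phi_def)

lemma Rstar_stochastic:
  assumes P: "\<And>i j. 0 \<le> P i j" and Q: "\<And>i j. 0 \<le> Q i j" and r: "\<And>u. 0 < r u"
    and eigen: "\<And>u. (\<Sum>v\<in>UNIV. Phi P Q f \<theta> u v * r v) = r u"
  shows "stochastic (Rstar P Q f \<theta> r)"
  unfolding stochastic_def
proof safe
  show "0 \<le> Rstar P Q f \<theta> r u v" for u v
    using P Q r[of u] r[of v] by (cases u, cases v) (simp add: Rstar_eq)
  show "(\<Sum>v\<in>UNIV. Rstar P Q f \<theta> r u v) = 1" for u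
    using eigen[of u] r[of u] by (simp add: Rstar_def mult.commute flip: sum_divide_distrib)
qed

lemma Rstar_pos_iff:
  assumes P: "\<And>i j. 0 \<le> P i j" and Q: "\<And>i j. 0 \<le> Q i j" and r: "\<And>u. 0 < r u"
  shows "0 < Rstar P Q f \<theta> r (x, y) (x', y') \<longleftrightarrow> 0 < P x x' \<and> 0 < Q y y'"
proof -
  define g where "g = r (x', y') / r (x, y) * exp (\<theta> * of_int (f x' y'))"
  have "Rstar P Q f \<theta> r (x, y) (x', y') = g * (P x x' * Q y y')"
    by (simp add: Rstar_eq g_def)
  moreover have "0 < g"
    using r[of "(x, y)"] r[of "(x', y')"] by (simp add: g_def)
  ultimately show ?thesis
    using P[of x x'] Q[of y y'] by (simp add: zero_less_mult_iff)
qed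

lemma ln_Rstar:
  assumes P: "\<And>i j. 0 \<le> P i j" and Q: "\<And>i j. 0 \<le> Q i j" and r: "\<And>u. 0 < r u"
    and pos: "0 < Rstar P Q f \<theta> r u v"
  shows "ln (Rstar P Q f \<theta> r u v) = \<theta> * of_int (f (fst v) (snd v))
    + ln (P (fst u) (fst v)) + ln (Q (snd u) (snd v)) + ln (r v) - ln (r u)"
proof -
  obtain x y x' y' where uv: "u = (x, y)" "v = (x', y')" by (cases u, cases v) auto
  have "0 < P x x'" "0 < Q y y'"
    using pos Rstar_pos_iff[where P=P and Q=Q and r=r, OF P Q r] unfolding uv by blast+
  with r[of u] r[of v] show ?thesis
    unfolding uv Rstar_eq by (simp add: ln_mult ln_div)
qed

lemma Rstar_mpow_eventually_pos:
  fixes P Q :: "'e::finite \<Rightarrow> 'e \<Rightarrow> real"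
  assumes P: "\<And>i j. 0 \<le> P i j" "irreducible_mat P" "aperiodic_mat P"
    and Q: "\<And>i j. 0 \<le> Q i j" "irreducible_mat Q" "aperiodic_mat Q"
    and r: "\<And>u. 0 < r u"
  shows "eventually (\<lambda>n. \<forall>u v. 0 < mpow (Rstar P Q f \<theta> r) n u v) sequentially"
proof -
  define g where "g z = r (snd z) / r (fst z) * exp (\<theta> * of_int (f (fst (snd z)) (snd (snd z))))"
    for z :: "('e \<times> 'e) \<times> ('e \<times> 'e)"
  define c where "c = Min (range g)"
  have "0 < c" unfolding c_def g_def using r by simp
  have lower: "c * P x x' * Q y y' \<le> Rstar P Q f \<theta> r (x, y) (x', y')" for x y x' y'
  proof -
    have "c \<le> g ((x, y), (x', y'))" unfolding c_def by (rule Min_le) simp_all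
    then have "c * (P x x' * Q y y') \<le> g ((x, y), (x', y')) * (P x x' * Q y y')"
      using P(1)[of x x'] Q(1)[of y y'] by (intro mult_right_mono) simp_all
    then show ?thesis by (simp add: Rstar_eq g_def mult.assoc)
  qed
  have "eventually (\<lambda>n. \<forall>i j. 0 < mpow P n i j) sequentially"
    "eventually (\<lambda>n. \<forall>i j. 0 < mpow Q n i j) sequentially"
    using mpow_eventually_pos[of P, OF P] mpow_eventually_pos[of Q, OF Q] by blast+
  then show ?thesis
  proof eventually_elim
    case (elim n)
    show ?case
    proof clarify
      fix x y x' y'
      have "0 < c ^ n * mpow P n x x' * mpow Q n y y'" using elim \<open>0 < c\<close> by simp
      also have "\<dots> \<le> mpow (Rstar P Q f \<theta> r) n (x, y) (x', y')"
        using mpow_ge_product[of c P Q "Rstar P Q f \<theta> r", OF less_imp_le[OF \<open>0 < c\<close>] lower P(1) Q(1)] .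
      finally show "0 < mpow (Rstar P Q f \<theta> r) n (x, y) (x', y')" .
    qed
  qed
qed

lemma sum_ln_Rstar:
  fixes w :: "'e::finite \<times> 'e \<Rightarrow> 'e \<times> 'e \<Rightarrow> real"
  assumes P: "\<And>i j. 0 \<le> P i j" and Q: "\<And>i j. 0 \<le> Q i j" and r: "\<And>u. 0 < r u"
    and support: "\<And>u v. w u v \<noteq> 0 \<Longrightarrow> 0 < Rstar P Q f \<theta> r u v"
    and rows: "\<And>u. (\<Sum>v\<in>UNIV. w u v) = \<rho> u" and cols: "\<And>v. (\<Sum>u\<in>UNIV. w u v) = \<rho> v"
  shows "(\<Sum>u\<in>UNIV. \<Sum>v\<in>UNIV. w u v * ln (Rstar P Q f \<theta> r u v))
    = \<theta> * (\<Sum>v\<in>UNIV. \<rho> v * of_int (f (fst v) (snd v)))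
      + (\<Sum>x\<in>UNIV. \<Sum>x'\<in>UNIV. fst_marginal w x x' * ln (P x x'))
      + (\<Sum>y\<in>UNIV. \<Sum>y'\<in>UNIV. snd_marginal w y y' * ln (Q y y'))"
proof -
  define h where "h v = \<theta> * of_int (f (fst v) (snd v)) + ln (r v)" for v :: "'e \<times> 'e"
  have "w u v * ln (Rstar P Q f \<theta> r u v)
      = w u v * (h v + ln (P (fst u) (fst v)) + ln (Q (snd u) (snd v)) - ln (r u))" for u v
  proof (cases "w u v = 0")
    case False
    then show ?thesis using ln_Rstar[where P=P and Q=Q and r=r, OF P Q r support] by (simp add: h_def)
  qed simp
  then have "w u v * ln (Rstar P Q f \<theta> r u v) = w u v * h v
      + w u v * ln (P (fst u) (fst v)) + w u v * ln (Q (snd u) (snd v)) - w u v * ln (r u)" for u v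
    by (simp add: distrib_left right_diff_distrib)
  then have "(\<Sum>u\<in>UNIV. \<Sum>v\<in>UNIV. w u v * ln (Rstar P Q f \<theta> r u v))
      = (\<Sum>u\<in>UNIV. \<Sum>v\<in>UNIV. w u v * h v)
        + (\<Sum>u\<in>UNIV. \<Sum>v\<in>UNIV. w u v * ln (P (fst u) (fst v)))
        + (\<Sum>u\<in>UNIV. \<Sum>v\<in>UNIV. w u v * ln (Q (snd u) (snd v)))
        - (\<Sum>u\<in>UNIV. \<Sum>v\<in>UNIV. w u v * ln (r u))"
    by (simp add: sum.distrib sum_subtractf)
  also have "(\<Sum>u\<in>UNIV. \<Sum>v\<in>UNIV. w u v * h v) = (\<Sum>v\<in>UNIV. \<rho> v * h v)"
    by (subst sum.swap) (simp add: cols flip: sum_distrib_right)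
  also have "(\<Sum>u\<in>UNIV. \<Sum>v\<in>UNIV. w u v * ln (r u)) = (\<Sum>u\<in>UNIV. \<rho> u * ln (r u))"
    by (simp add: rows flip: sum_distrib_right)
  finally show ?thesis
    by (simp add: h_def sum_fst_marginal[of w "\<lambda>x x'. ln (P x x')"] sum_snd_marginal[of w "\<lambda>y y'. ln (Q y y')"]
        distrib_left sum.distrib sum_distrib_left mult.left_commute)
qed

lemma bij_betw_rotate_mod:
  assumes "0 < (n::nat)" shows "bij_betw (\<lambda>k. (k + 1) mod n) {..<n} {..<n}"
  by (rule bij_betwI[where g="\<lambda>k. if k = 0 then n - 1 else k - 1"]) (use assms in \<open>auto simp: mod_Suc\<close>)

lemma prod_rotate_mod:
  assumes "0 < (n::nat)" shows "(\<Prod>k<n. g ((k + 1) mod n)) = (\<Prod>k<n. g k)"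
  using prod.reindex_bij_betw[OF bij_betw_rotate_mod[OF assms]] .

lemma prod_Rstar_cycle:
  fixes x z :: "nat \<Rightarrow> 'e"
  assumes n: "0 < n" and r: "\<And>u. 0 < r u"
  shows "(\<Prod>k<n. Rstar P Q f \<theta> r (x k, z k) (x ((k + 1) mod n), z ((k + 1) mod n)))
    = exp (\<theta> * (\<Sum>k<n. of_int (f (x k) (z k))))
      * (\<Prod>k<n. P (x k) (x ((k + 1) mod n))) * (\<Prod>k<n. Q (z k) (z ((k + 1) mod n)))"
proof -
  define w where "w k = (x k, z k)" for k
  have "(\<Prod>k<n. Rstar P Q f \<theta> r (x k, z k) (x ((k + 1) mod n), z ((k + 1) mod n)))
     = (\<Prod>k<n. r (w ((k + 1) mod n))) / (\<Prod>k<n. r (w k))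
       * (\<Prod>k<n. exp (\<theta> * of_int (f (x ((k + 1) mod n)) (z ((k + 1) mod n)))))
       * (\<Prod>k<n. P (x k) (x ((k + 1) mod n))) * (\<Prod>k<n. Q (z k) (z ((k + 1) mod n)))"
    by (simp add: Rstar_def Phi_def w_def prod.distrib prod_dividef mult.assoc)
  also have "\<dots> = (\<Prod>k<n. r (w k)) / (\<Prod>k<n. r (w k))
       * (\<Prod>k<n. exp (\<theta> * of_int (f (x k) (z k))))
       * (\<Prod>k<n. P (x k) (x ((k + 1) mod n))) * (\<Prod>k<n. Q (z k) (z ((k + 1) mod n)))"
    using prod_rotate_mod[OF n, of "\<lambda>k. r (w k)"]
      prod_rotate_mod[OF n, of "\<lambda>k. exp (\<theta> * of_int (f (x k) (z k)))"] by simp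
  also have "(\<Prod>k<n. r (w k)) / (\<Prod>k<n. r (w k)) = 1"
    using r by (simp add: prod_pos less_imp_neq[symmetric])
  finally show ?thesis by (simp add: exp_sum sum_distrib_left)
qed

lemma Rstar_not_product:
  assumes r: "\<And>u. 0 < r u" and \<theta>: "\<theta> \<noteq> 0" and "cond_C2 P Q f"
  shows "\<nexists>KX KY. \<forall>u v. Rstar P Q f \<theta> r u v = KX (fst u) (fst v) * KY (snd u) (snd v)"
proof
  assume "\<exists>KX KY. \<forall>u v. Rstar P Q f \<theta> r u v = KX (fst u) (fst v) * KY (snd u) (snd v)"
  then obtain KX KY where K: "\<And>u v. Rstar P Q f \<theta> r u v = KX (fst u) (fst v) * KY (snd u) (snd v)"
    by blast
  obtain n x y where "1 \<le> n" and x: "is_cycle P n x" and y: "is_cycle Q n y"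
    and differ: "(\<Sum>k<n. f (x k) (y k)) \<noteq> (\<Sum>k<n. f (x k) (y ((k + 1) mod n)))"
    using \<open>cond_C2 P Q f\<close>[unfolded cond_C2_def, rule_format, of 1] by blast
  then have n: "0 < n" by simp
  define s where "s k = (k + 1) mod n" for k
  define y' where "y' k = y (s k)" for k
  \<comment> \<open>the weight of a product kernel along the cycle \<open>(x, z)\<close> is invariant under rotating \<open>z\<close>\<close>
  have weight: "exp (\<theta> * (\<Sum>k<n. of_int (f (x k) (z k))))
        * ((\<Prod>k<n. P (x k) (x (s k))) * (\<Prod>k<n. Q (z k) (z (s k))))
      = (\<Prod>k<n. KX (x k) (x (s k))) * (\<Prod>k<n. KY (z k) (z (s k)))" for z
    using prod_Rstar_cycle[where r=r and x=x and z=z and P=P and Q=Q and f=f and \<theta>=\<theta>, OF n r]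
    by (simp add: K s_def prod.distrib mult.assoc)
  have rotate: "(\<Prod>k<n. g (y' k) (y' (s k))) = (\<Prod>k<n. g (y k) (y (s k)))" for g
    unfolding y'_def s_def by (rule prod_rotate_mod[OF n, of "\<lambda>k. g (y k) (y ((k + 1) mod n))"])
  define C where "C = (\<Prod>k<n. P (x k) (x (s k))) * (\<Prod>k<n. Q (y k) (y (s k)))"
  have "0 < C"
    using x y unfolding is_cycle_def s_def C_def by (intro mult_pos_pos prod_pos) auto
  moreover have "exp (\<theta> * (\<Sum>k<n. of_int (f (x k) (y k)))) * C
      = exp (\<theta> * (\<Sum>k<n. of_int (f (x k) (y' k)))) * C"
    using weight[of y] weight[of y'] rotate[of Q] rotate[of KY] unfolding C_def by simp
  ultimately have "\<theta> * (\<Sum>k<n. of_int (f (x k) (y k))) = \<theta> * (\<Sum>k<n. of_int (f (x k) (y' k)))"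
    by simp
  then have "(\<Sum>k<n. f (x k) (y k)) = (\<Sum>k<n. f (x k) (y' k))"
    using \<theta> by (simp flip: of_int_sum)
  with differ show False unfolding y'_def s_def by simp
qed

section \<open>Expectations under the tilted chain\<close>

lemma sum_product_marginals:
  fixes p :: "'a::finite \<times> 'b::finite \<Rightarrow> real"
  shows "(\<Sum>u\<in>UNIV. \<Sum>v\<in>UNIV. p u * p v * h (fst u) (snd v))
    = (\<Sum>x\<in>UNIV. \<Sum>y\<in>UNIV. (\<Sum>y'\<in>UNIV. p (x, y')) * (\<Sum>x'\<in>UNIV. p (x', y)) * h x y)"
proof -
  have snd_weight: "(\<Sum>v\<in>UNIV. p v * g (snd v)) = (\<Sum>y\<in>UNIV. (\<Sum>x'\<in>UNIV. p (x', y)) * g y)" for g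
    by (simp add: sum_UNIV_pair sum_distrib_right) (rule sum.swap)
  have "(\<Sum>u\<in>UNIV. \<Sum>v\<in>UNIV. p u * p v * h (fst u) (snd v))
      = (\<Sum>u\<in>UNIV. p u * (\<Sum>y\<in>UNIV. (\<Sum>x'\<in>UNIV. p (x', y)) * h (fst u) y))"
    by (simp add: mult.assoc snd_weight flip: sum_distrib_left)
  also have "\<dots> = (\<Sum>x\<in>UNIV. (\<Sum>y'\<in>UNIV. p (x, y')) * (\<Sum>y\<in>UNIV. (\<Sum>x'\<in>UNIV. p (x', y)) * h x y))"
    by (simp add: sum_UNIV_pair sum_distrib_right)
  also have "\<dots> = (\<Sum>x\<in>UNIV. \<Sum>y\<in>UNIV. (\<Sum>y'\<in>UNIV. p (x, y')) * (\<Sum>x'\<in>UNIV. p (x', y)) * h x y)"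
    by (simp add: mult.assoc flip: sum_distrib_left)
  finally show ?thesis .
qed

lemma mu_star_T_tendsto:
  fixes R :: "'e::finite \<times> 'e \<Rightarrow> 'e \<times> 'e \<Rightarrow> real"
  assumes "stochastic R" "invariant_prob R p" "0 < m" "\<And>u v. 0 < mpow R m u v"
  shows "(\<lambda>T. mu_star_T R p f T)
    \<longlonglongrightarrow> (\<Sum>x\<in>UNIV. \<Sum>y\<in>UNIV. (\<Sum>y'\<in>UNIV. p (x, y')) * (\<Sum>x'\<in>UNIV. p (x', y)) * of_int (f x y))"
proof -
  have "(\<lambda>T. mu_star_T R p f T) \<longlonglongrightarrow> (\<Sum>u\<in>UNIV. \<Sum>v\<in>UNIV. p u * p v * of_int (f (fst u) (snd v)))"
    unfolding mu_star_T_def using mpow_tendsto_invariant_prob[OF assms] by (intro tendsto_intros)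
  then show ?thesis by (simp only: sum_product_marginals[of p "\<lambda>x y. real_of_int (f x y)"])
qed

lemma sum_edge_measure_ln_Rstar:
  fixes P Q :: "'e::finite \<Rightarrow> 'e \<Rightarrow> real"
  assumes P: "\<And>i j. 0 \<le> P i j" and Q: "\<And>i j. 0 \<le> Q i j" and r: "\<And>u. 0 < r u"
    and R: "stochastic (Rstar P Q f \<theta> r)" and p: "invariant_prob (Rstar P Q f \<theta> r) p"
  shows "(\<Sum>u\<in>UNIV. \<Sum>v\<in>UNIV. edge_measure p (Rstar P Q f \<theta> r) u v * ln (Rstar P Q f \<theta> r u v))
    = \<theta> * (\<Sum>v\<in>UNIV. p v * of_int (f (fst v) (snd v)))
      + (\<Sum>x\<in>UNIV. \<Sum>x'\<in>UNIV. fst_marginal (edge_measure p (Rstar P Q f \<theta> r)) x x' * ln (P x x'))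
      + (\<Sum>y\<in>UNIV. \<Sum>y'\<in>UNIV. snd_marginal (edge_measure p (Rstar P Q f \<theta> r)) y y' * ln (Q y y'))"
proof (rule sum_ln_Rstar[where r=r, OF P Q r])
  show "0 < Rstar P Q f \<theta> r u v" if "edge_measure p (Rstar P Q f \<theta> r) u v \<noteq> 0" for u v
    using that stochastic_nonneg[OF R, of u v] by (simp add: edge_measure_def order_less_le)
qed (simp_all add: sum_edge_measure_row[OF R] sum_edge_measure_col[OF p])

lemma sum_marginal_product_ln_Rstar:
  fixes P Q :: "'e::finite \<Rightarrow> 'e \<Rightarrow> real"
  assumes P: "\<And>i j. 0 \<le> P i j" and Q: "\<And>i j. 0 \<le> Q i j" and r: "\<And>u. 0 < r u"
    and R: "stochastic (Rstar P Q f \<theta> r)" and p: "invariant_prob (Rstar P Q f \<theta> r) p"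
  shows "(\<Sum>u\<in>UNIV. \<Sum>v\<in>UNIV. marginal_product (edge_measure p (Rstar P Q f \<theta> r)) u v
            * ln (Rstar P Q f \<theta> r u v))
    = \<theta> * (\<Sum>v\<in>UNIV. (\<Sum>y\<in>UNIV. p (fst v, y)) * (\<Sum>x\<in>UNIV. p (x, snd v)) * of_int (f (fst v) (snd v)))
      + (\<Sum>x\<in>UNIV. \<Sum>x'\<in>UNIV. fst_marginal (edge_measure p (Rstar P Q f \<theta> r)) x x' * ln (P x x'))
      + (\<Sum>y\<in>UNIV. \<Sum>y'\<in>UNIV. snd_marginal (edge_measure p (Rstar P Q f \<theta> r)) y y' * ln (Q y y'))"
  unfolding marginals_marginal_product_edge_measure(1,2)[OF R p, symmetric]
proof (rule sum_ln_Rstar[where r=r, OF P Q r])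
  show "0 < Rstar P Q f \<theta> r u v" if "marginal_product (edge_measure p (Rstar P Q f \<theta> r)) u v \<noteq> 0" for u v
    using marginal_product_edge_measure_imp_pos[where R="Rstar P Q f \<theta> r" and p=p,
        OF stochastic_nonneg[OF R] Rstar_pos_iff[where r=r, OF P Q r] that] .
qed (simp_all add: sum_marginal_product_edge_measure_row[OF R] sum_marginal_product_edge_measure_col[OF p])

lemma expectation_product_of_marginals_less:
  fixes P Q :: "'e::finite \<Rightarrow> 'e \<Rightarrow> real" and p :: "'e \<times> 'e \<Rightarrow> real"
  assumes P: "\<And>i j. 0 \<le> P i j" and Q: "\<And>i j. 0 \<le> Q i j" and r: "\<And>u. 0 < r u"
    and R: "stochastic (Rstar P Q f \<theta> r)" and p: "invariant_prob (Rstar P Q f \<theta> r) p"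
    and p_pos: "\<And>u. 0 < p u" and \<theta>: "0 < \<theta>" and "cond_C2 P Q f"
  shows "(\<Sum>x\<in>UNIV. \<Sum>y\<in>UNIV. (\<Sum>y'\<in>UNIV. p (x, y')) * (\<Sum>x'\<in>UNIV. p (x', y)) * of_int (f x y))
    < (\<Sum>u\<in>UNIV. p u * of_int (f (fst u) (snd u)))"
proof -
  have "\<nexists>KX KY. \<forall>u v. Rstar P Q f \<theta> r u v = KX (fst u) (fst v) * KY (snd u) (snd v)"
    using \<theta> by (intro Rstar_not_product[where r=r, OF r _ \<open>cond_C2 P Q f\<close>]) simp
  from sum_marginal_product_ln_less[OF R p p_pos Rstar_pos_iff[where r=r, OF P Q r] this]
  have "\<theta> * (\<Sum>v\<in>UNIV. (\<Sum>y\<in>UNIV. p (fst v, y)) * (\<Sum>x\<in>UNIV. p (x, snd v)) * of_int (f (fst v) (snd v)))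
      < \<theta> * (\<Sum>v\<in>UNIV. p v * of_int (f (fst v) (snd v)))"
    unfolding sum_edge_measure_ln_Rstar[OF P Q r R p] sum_marginal_product_ln_Rstar[OF P Q r R p] by simp
  with \<theta> show ?thesis by (simp add: sum_UNIV_pair)
qed

theorem lemma5p9:
  fixes P Q :: "'e::finite \<Rightarrow> 'e \<Rightarrow> real"
    and piP piQ :: "'e \<Rightarrow> real"
    and f :: "'e \<Rightarrow> 'e \<Rightarrow> int"
    and \<theta>s :: real
    and rs pis :: "'e \<times> 'e \<Rightarrow> real"
  assumes P: "stochastic P" "irreducible_mat P" "aperiodic_mat P"
    and Q: "stochastic Q" "irreducible_mat Q" "aperiodic_mat Q"
    and piP: "invariant_prob P piP" and piQ: "invariant_prob Q piQ"
    and gcd_f: "Gcd (range (case_prod f)) = 1"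
    and mu_neg: "(\<Sum>x\<in>UNIV. \<Sum>y\<in>UNIV. piP x * piQ y * of_int (f x y)) < 0"
    and C1: "cond_C1 P Q f"
    and C2: "cond_C2 P Q f"
    and theta: "\<theta>s > 0" "spec_rad (Phi P Q f \<theta>s) = 1"
    and theta_unique: "\<And>\<theta>. \<theta> > 0 \<Longrightarrow> spec_rad (Phi P Q f \<theta>) = 1 \<Longrightarrow> \<theta> = \<theta>s"
    and rs: "\<forall>u. rs u > 0" "\<forall>u. (\<Sum>v\<in>UNIV. Phi P Q f \<theta>s u v * rs v) = rs u"
    and pis: "invariant_prob (Rstar P Q f \<theta>s rs) pis"
  shows "\<exists>L. (\<lambda>T. mu_star_T (Rstar P Q f \<theta>s rs) pis f T) \<longlonglongrightarrow> L
           \<and> L = (\<Sum>x\<in>UNIV. \<Sum>y\<in>UNIV. (\<Sum>y'\<in>UNIV. pis (x, y')) * (\<Sum>x'\<in>UNIV. pis (x', y)) * of_int (f x y))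
           \<and> L < (\<Sum>u\<in>UNIV. pis u * of_int (f (fst u) (snd u)))"
proof -
  define R where "R = Rstar P Q f \<theta>s rs"
  have P_nonneg: "0 \<le> P i j" and Q_nonneg: "0 \<le> Q i j" for i j
    using P(1) Q(1) by (simp_all add: stochastic_nonneg)
  have r: "0 < rs u" for u using rs(1) by blast
  have R: "stochastic R"
    unfolding R_def using rs(2) by (intro Rstar_stochastic[where r=rs, OF P_nonneg Q_nonneg r]) blast
  have pis': "invariant_prob R pis" using pis unfolding R_def .
  obtain n where n: "\<And>u v. 0 < mpow R (Suc n) u v"
    using Rstar_mpow_eventually_pos[where r=rs, OF P_nonneg P(2,3) Q_nonneg Q(2,3) r]
    unfolding R_def eventually_sequentially by (meson le_SucI order.refl)
  have pis_pos: "0 < pis u" for u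
    using invariant_prob_pos[OF pis' stochastic_nonneg[OF R] n] .
  \<comment> \<open>only \<open>\<theta>s > 0\<close> and (C2) are used; the other hypotheses just pin down \<open>\<theta>s\<close> and \<open>rs\<close>\<close>
  show ?thesis
    using mu_star_T_tendsto[OF R pis' zero_less_Suc n, of f]
      expectation_product_of_marginals_less[where r=rs, OF P_nonneg Q_nonneg r R[unfolded R_def] pis
        pis_pos theta(1) C2]
    unfolding R_def by blast
qed

end
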